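(* For every finite graph $G$: (1) $\mathsf{cdeg}(G) \leq \widetilde{\omega}(G)\cdot(\mathsf{cideg}(G)-1)$; (2) $\widetilde{\omega}(G) \leq 2^{\mathsf{cdeg}(G)}$; (3) $\mathsf{cideg}(G) \leq \mathsf{cdeg}(G)+1$.
   Context: Two vertices of $G$ are equivalent if they lie in exactly the same maximal cliques of $G$. $\widetilde{\omega}(G)$ is the maximum over maximal cliques $K$ of the number of equivalence classes meeting $K$; $\mathsf{cideg}(G)$ is the maximum over vertices $v$ of the number of maximal cliques containing $v$; $\mathsf{cdeg}(G)$ (clique-degree) is the maximum degree of the graph whose vertices are the maximal cliques of $G$, two distinct maximal cliques adjacent iff they intersect. *)

theory Defs
  imports Main
begin

definition is_clique :: "'a set \<Rightarrow> ('a \<Rightarrow> 'a \<Rightarrow> bool) \<Rightarrow> 'a set \<Rightarrow> bool" where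
  "is_clique V E K \<longleftrightarrow> K \<subseteq> V \<and> (\<forall>x\<in>K. \<forall>y\<in>K. x \<noteq> y \<longrightarrow> E x y)"

definition is_max_clique :: "'a set \<Rightarrow> ('a \<Rightarrow> 'a \<Rightarrow> bool) \<Rightarrow> 'a set \<Rightarrow> bool" where
  "is_max_clique V E K \<longleftrightarrow> is_clique V E K \<and> (\<forall>K'. is_clique V E K' \<and> K \<subseteq> K' \<longrightarrow> K' = K)"

definition max_cliques :: "'a set \<Rightarrow> ('a \<Rightarrow> 'a \<Rightarrow> bool) \<Rightarrow> 'a set set" where
  "max_cliques V E = {K. is_max_clique V E K}"

definition cliques_at :: "'a set \<Rightarrow> ('a \<Rightarrow> 'a \<Rightarrow> bool) \<Rightarrow> 'a \<Rightarrow> 'a set set" where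
  "cliques_at V E v = {K \<in> max_cliques V E. v \<in> K}"

definition clique_classes :: "'a set \<Rightarrow> ('a \<Rightarrow> 'a \<Rightarrow> bool) \<Rightarrow> 'a set set" where
  "clique_classes V E = (\<lambda>v. {w \<in> V. cliques_at V E w = cliques_at V E v}) ` V"

text \<open>Maxima over possibly empty sets are taken to be 0.\<close>
definition omega_tilde :: "'a set \<Rightarrow> ('a \<Rightarrow> 'a \<Rightarrow> bool) \<Rightarrow> nat" where
  "omega_tilde V E = Max (insert 0
     ((\<lambda>K. card {C \<in> clique_classes V E. C \<inter> K \<noteq> {}}) ` max_cliques V E))"

definition cideg :: "'a set \<Rightarrow> ('a \<Rightarrow> 'a \<Rightarrow> bool) \<Rightarrow> nat" where
  "cideg V E = Max (insert 0 ((\<lambda>v. card (cliques_at V E v)) ` V))"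

definition cdeg :: "'a set \<Rightarrow> ('a \<Rightarrow> 'a \<Rightarrow> bool) \<Rightarrow> nat" where
  "cdeg V E = Max (insert 0
     ((\<lambda>K. card {K' \<in> max_cliques V E. K' \<noteq> K \<and> K \<inter> K' \<noteq> {}}) ` max_cliques V E))"

end

theory Submission
  imports Defs
begin

text \<open>
  Every equivalence class \<open>C\<close> is determined by the set \<open>class_cliques C\<close> of maximal cliques
  containing it, which for a class meeting a maximal clique \<open>K\<close> contains \<open>K\<close>. Every clique
  intersecting \<open>K\<close> passes through some class meeting \<open>K\<close>, so the neighbourhood of \<open>K\<close> in the
  clique graph is covered by the sets \<open>class_cliques C - {K}\<close>, each of size at most
  \<open>cideg - 1\<close>; this gives (1). The map \<open>C \<mapsto> class_cliques C - {K}\<close> is injective into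
  the subsets of that neighbourhood; this gives (2). Finally all maximal cliques through a
  vertex \<open>v\<close> lie in \<open>K\<close> or its neighbourhood for any one of them \<open>K\<close>; this gives (3).
  None of this uses that \<open>E\<close> is symmetric and irreflexive.
\<close>

definition clique_nbrs :: "'a set \<Rightarrow> ('a \<Rightarrow> 'a \<Rightarrow> bool) \<Rightarrow> 'a set \<Rightarrow> 'a set set" where
  "clique_nbrs V E K = {K' \<in> max_cliques V E. K' \<noteq> K \<and> K \<inter> K' \<noteq> {}}"

definition classes_meeting :: "'a set \<Rightarrow> ('a \<Rightarrow> 'a \<Rightarrow> bool) \<Rightarrow> 'a set \<Rightarrow> 'a set set" where
  "classes_meeting V E K = {C \<in> clique_classes V E. C \<inter> K \<noteq> {}}"

definition class_cliques :: "'a set \<Rightarrow> ('a \<Rightarrow> 'a \<Rightarrow> bool) \<Rightarrow> 'a set \<Rightarrow> 'a set set" where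
  "class_cliques V E C = {K \<in> max_cliques V E. C \<subseteq> K}"

lemma max_clique_subset: "K \<in> max_cliques V E \<Longrightarrow> K \<subseteq> V"
  by (simp add: max_cliques_def is_max_clique_def is_clique_def)

lemma finite_max_cliques: "finite V \<Longrightarrow> finite (max_cliques V E)"
  by (rule finite_subset[of _ "Pow V"]) (auto dest: max_clique_subset)

lemma finite_clique_nbrs: "finite V \<Longrightarrow> finite (clique_nbrs V E K)"
  by (simp add: clique_nbrs_def finite_max_cliques)

lemma finite_classes_meeting: "finite V \<Longrightarrow> finite (classes_meeting V E K)"
  by (simp add: classes_meeting_def clique_classes_def)

lemma cliques_at_eq_class_cliques:
  assumes "C \<in> clique_classes V E" and "x \<in> C"
  shows "cliques_at V E x = class_cliques V E C"
proof -
  obtain v where v: "v \<in> V" "C = {w \<in> V. cliques_at V E w = cliques_at V E v}"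
    using assms(1) by (auto simp: clique_classes_def)
  have "class_cliques V E C = cliques_at V E v"
    using v by (auto simp: class_cliques_def cliques_at_def)
  then show ?thesis
    using v assms(2) by simp
qed

lemma clique_class_eq:
  assumes "C \<in> clique_classes V E"
  shows "C = {w \<in> V. cliques_at V E w = class_cliques V E C}"
proof -
  obtain v where "v \<in> V" "C = {w \<in> V. cliques_at V E w = cliques_at V E v}"
    using assms by (auto simp: clique_classes_def)
  then show ?thesis
    using cliques_at_eq_class_cliques[OF assms] by auto
qed

lemma inj_on_class_cliques: "inj_on (class_cliques V E) (clique_classes V E)"
  by (rule inj_onI) (metis clique_class_eq)

lemma mem_class_cliques:
  assumes "K \<in> max_cliques V E" and "C \<in> classes_meeting V E K"
  shows "K \<in> class_cliques V E C"
proof -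
  obtain x where "x \<in> C" "x \<in> K"
    using assms(2) by (auto simp: classes_meeting_def)
  then show ?thesis
    using assms cliques_at_eq_class_cliques
    by (fastforce simp: classes_meeting_def cliques_at_def)
qed

lemma class_cliques_subset_clique_nbrs:
  assumes "C \<in> classes_meeting V E K"
  shows "class_cliques V E C - {K} \<subseteq> clique_nbrs V E K"
  using assms by (auto simp: classes_meeting_def class_cliques_def clique_nbrs_def)

lemma clique_nbrs_subset_UN_class_cliques:
  assumes "K \<in> max_cliques V E"
  shows "clique_nbrs V E K \<subseteq> (\<Union>C\<in>classes_meeting V E K. class_cliques V E C - {K})"
proof
  fix K' assume "K' \<in> clique_nbrs V E K"
  then have K': "K' \<in> max_cliques V E" "K' \<noteq> K" and "K \<inter> K' \<noteq> {}"
    by (auto simp: clique_nbrs_def)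
  then obtain x where x: "x \<in> K" "x \<in> K'"
    by auto
  define C where "C = {w \<in> V. cliques_at V E w = cliques_at V E x}"
  have "x \<in> V"
    using max_clique_subset[OF assms] x(1) by auto
  then have C: "C \<in> clique_classes V E" "x \<in> C"
    by (auto simp: C_def clique_classes_def)
  then have "C \<in> classes_meeting V E K"
    using x(1) by (auto simp: classes_meeting_def)
  moreover have "K' \<in> class_cliques V E C"
    using cliques_at_eq_class_cliques[OF C] K'(1) x(2) by (auto simp: cliques_at_def)
  ultimately show "K' \<in> (\<Union>C\<in>classes_meeting V E K. class_cliques V E C - {K})"
    using K'(2) by blast
qed

lemma card_cliques_at_le_cideg:
  assumes "finite V" and "v \<in> V"
  shows "card (cliques_at V E v) \<le> cideg V E"
  unfolding cideg_def using assms by (intro Max_ge) auto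

lemma card_class_cliques_le_cideg:
  assumes "finite V" and "C \<in> clique_classes V E"
  shows "card (class_cliques V E C) \<le> cideg V E"
proof -
  obtain x where "x \<in> V" "x \<in> C"
    using assms(2) by (auto simp: clique_classes_def)
  then show ?thesis
    using card_cliques_at_le_cideg[OF assms(1)] cliques_at_eq_class_cliques[OF assms(2)]
    by metis
qed

lemma card_clique_nbrs_le:
  assumes "finite V" and K: "K \<in> max_cliques V E"
  shows "card (clique_nbrs V E K) \<le> card (classes_meeting V E K) * (cideg V E - 1)"
proof -
  have fin_class_cliques: "finite (class_cliques V E C)" for C
    using assms(1) by (simp add: class_cliques_def finite_max_cliques)
  have "card (clique_nbrs V E K)
      \<le> card (\<Union>C\<in>classes_meeting V E K. class_cliques V E C - {K})"
    using clique_nbrs_subset_UN_class_cliques[OF K]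
    by (rule card_mono[rotated]) (simp add: assms(1) finite_classes_meeting fin_class_cliques)
  also have "\<dots> \<le> (\<Sum>C\<in>classes_meeting V E K. card (class_cliques V E C - {K}))"
    by (rule card_UN_le[OF finite_classes_meeting[OF assms(1)]])
  also have "\<dots> \<le> (\<Sum>C\<in>classes_meeting V E K. cideg V E - 1)"
  proof (rule sum_mono)
    fix C assume C: "C \<in> classes_meeting V E K"
    then have "card (class_cliques V E C - {K}) = card (class_cliques V E C) - 1"
      using mem_class_cliques[OF K] fin_class_cliques by simp
    also have "\<dots> \<le> cideg V E - 1"
      using C card_class_cliques_le_cideg[OF assms(1)]
      by (simp add: classes_meeting_def diff_le_mono)
    finally show "card (class_cliques V E C - {K}) \<le> cideg V E - 1" .
  qed
  finally show ?thesis
    by simp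
qed

lemma card_classes_meeting_le:
  assumes "finite V" and K: "K \<in> max_cliques V E"
  shows "card (classes_meeting V E K) \<le> 2 ^ card (clique_nbrs V E K)"
proof -
  have "inj_on (\<lambda>C. class_cliques V E C - {K}) (classes_meeting V E K)"
  proof (rule inj_onI)
    fix C1 C2
    assume C: "C1 \<in> classes_meeting V E K" "C2 \<in> classes_meeting V E K"
      and "class_cliques V E C1 - {K} = class_cliques V E C2 - {K}"
    then have "class_cliques V E C1 = class_cliques V E C2"
      using mem_class_cliques[OF K] by blast
    then show "C1 = C2"
      using C inj_on_class_cliques[of V E] by (simp add: classes_meeting_def inj_on_def)
  qed
  moreover have "(\<lambda>C. class_cliques V E C - {K}) ` classes_meeting V E K
      \<subseteq> Pow (clique_nbrs V E K)"
    using class_cliques_subset_clique_nbrs by blast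
  ultimately have "card (classes_meeting V E K) \<le> card (Pow (clique_nbrs V E K))"
    by (rule card_inj_on_le) (simp add: assms(1) finite_clique_nbrs)
  then show ?thesis
    by (simp add: card_Pow assms(1) finite_clique_nbrs)
qed

lemma card_cliques_at_le:
  assumes "finite V" and "K \<in> cliques_at V E v"
  shows "card (cliques_at V E v) \<le> card (clique_nbrs V E K) + 1"
proof -
  have "cliques_at V E v \<subseteq> insert K (clique_nbrs V E K)"
    using assms(2) by (auto simp: cliques_at_def clique_nbrs_def)
  then have "card (cliques_at V E v) \<le> card (insert K (clique_nbrs V E K))"
    by (rule card_mono[rotated]) (simp add: assms(1) finite_clique_nbrs)
  also have "\<dots> \<le> card (clique_nbrs V E K) + 1"
    by (simp add: card_insert_if assms(1) finite_clique_nbrs)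
  finally show ?thesis .
qed

lemma card_classes_meeting_le_omega_tilde:
  assumes "finite V" and "K \<in> max_cliques V E"
  shows "card (classes_meeting V E K) \<le> omega_tilde V E"
  unfolding omega_tilde_def classes_meeting_def
  using assms by (intro Max_ge) (auto simp: finite_max_cliques)

lemma card_clique_nbrs_le_cdeg:
  assumes "finite V" and "K \<in> max_cliques V E"
  shows "card (clique_nbrs V E K) \<le> cdeg V E"
  unfolding cdeg_def clique_nbrs_def
  using assms by (intro Max_ge) (auto simp: finite_max_cliques)

lemma cdeg_le_omega_tilde_mult_cideg:
  assumes "finite V"
  shows "cdeg V E \<le> omega_tilde V E * (cideg V E - 1)"
proof -
  have "card (clique_nbrs V E K) \<le> omega_tilde V E * (cideg V E - 1)"
    if "K \<in> max_cliques V E" for K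
    using card_clique_nbrs_le[OF assms that] card_classes_meeting_le_omega_tilde[OF assms that]
    by (meson le_trans mult_le_mono1)
  then show ?thesis
    using assms by (simp add: cdeg_def clique_nbrs_def finite_max_cliques)
qed

lemma omega_tilde_le_power_cdeg:
  assumes "finite V"
  shows "omega_tilde V E \<le> 2 ^ cdeg V E"
proof -
  have "card (classes_meeting V E K) \<le> 2 ^ cdeg V E" if "K \<in> max_cliques V E" for K
    using card_classes_meeting_le[OF assms that] card_clique_nbrs_le_cdeg[OF assms that]
    by (meson le_trans one_le_numeral power_increasing)
  then show ?thesis
    using assms by (simp add: omega_tilde_def classes_meeting_def finite_max_cliques)
qed

lemma cideg_le_cdeg_plus_1:
  assumes "finite V"
  shows "cideg V E \<le> cdeg V E + 1"
proof -
  have "card (cliques_at V E v) \<le> cdeg V E + 1" for v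
  proof (cases "cliques_at V E v = {}")
    case False
    then obtain K where K: "K \<in> cliques_at V E v"
      by blast
    then have "K \<in> max_cliques V E"
      by (simp add: cliques_at_def)
    then show ?thesis
      using card_cliques_at_le[OF assms K] card_clique_nbrs_le_cdeg[OF assms] by fastforce
  qed simp
  then show ?thesis
    using assms by (simp add: cideg_def)
qed

theorem lemma5p3:
  fixes V :: "'a set" and E :: "'a \<Rightarrow> 'a \<Rightarrow> bool"
  assumes "finite V"
    and "\<And>x y. E x y \<Longrightarrow> x \<in> V \<and> y \<in> V"
    and "\<And>x y. E x y \<Longrightarrow> E y x"
    and "\<And>x. \<not> E x x"
  shows "cdeg V E \<le> omega_tilde V E * (cideg V E - 1) \<and>
         omega_tilde V E \<le> 2 ^ cdeg V E \<and>
         cideg V E \<le> cdeg V E + 1"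
  using cdeg_le_omega_tilde_mult_cideg[OF assms(1)] omega_tilde_le_power_cdeg[OF assms(1)]
    cideg_le_cdeg_plus_1[OF assms(1)]
  by blast

end
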